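(* Let $A$ be a finite set, $\Omega=A^{\mathbb{N}}$, and $\tilde\mu,\mu\in\Delta(\Omega)$ be such that $\tilde\mu$ weakly merges to $\mu$. Then for every $\epsilon>0$ there exists $N_0$ such that for every $N>N_0$ and every decision problem (finite decision set $D$ and payoff function $r:A\times D\to[0,1]$), every strategy that is $0$-optimal for $N$ periods under $\tilde\mu$ is $\epsilon$-optimal for $N$ periods under $\mu$.
   Context: For $\nu\in\Delta(\Omega)$ and $(a_0,\dots,a_{n-1})$ of positive $\nu$-probability, $\nu(\cdot\mid a_0,\dots,a_{n-1})\in\Delta(A)$ is the conditional distribution of the next outcome $a_n$. $\|p-q\|=\max_{a\in A}|p[a]-q[a]|$. $\tilde\mu$ weakly merges to $\mu$ if for $\mu$-a.e. $\omega=(a_0,a_1,\dots)$, $\frac1N\sum_{n=0}^{N-1}\|\tilde\mu(\cdot\mid a_0,\dots,a_{n-1})-\mu(\cdot\mid a_0,\dots,a_{n-1})\|\to0$. A strategy is a map $f:\bigcup_{n\ge0}A^n\to D$. For a belief $\nu$, $V_N^\nu(f)=\frac1N\int\sum_{n=0}^{N-1}r(a_n,f(a_0,\dots,a_{n-1}))\,\mathrm d\nu$. A strategy $f^*$ is $\epsilon$-optimal for $N$ periods under $\nu$ if $V_N^\nu(f)\le V_N^\nu(f^* )+\epsilon$ for every strategy $f$. *)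

theory Defs
  imports "HOL-Probability.Probability"
begin

definition Omega_M :: "(nat \<Rightarrow> 'a) measure" where
  "Omega_M = PiM UNIV (\<lambda>_::nat. count_space (UNIV::'a set))"

definition Delta_Omega :: "(nat \<Rightarrow> 'a) measure \<Rightarrow> bool" where
  "Delta_Omega \<nu> \<longleftrightarrow> prob_space \<nu> \<and> sets \<nu> = sets Omega_M"

definition hist :: "nat \<Rightarrow> (nat \<Rightarrow> 'a) \<Rightarrow> 'a list" where
  "hist n \<omega> = map \<omega> [0..<n]"

definition cyl :: "'a list \<Rightarrow> (nat \<Rightarrow> 'a) set" where
  "cyl xs = {\<omega> \<in> space (Omega_M :: (nat \<Rightarrow> 'a) measure). \<forall>i<length xs. \<omega> i = xs ! i}"

text \<open>Conditional distribution of the next outcome given history xs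
  (with the convention x/0 = 0 when the history has probability zero).\<close>
definition cond :: "(nat \<Rightarrow> 'a) measure \<Rightarrow> 'a list \<Rightarrow> 'a \<Rightarrow> real" where
  "cond \<nu> xs a = measure \<nu> (cyl (xs @ [a])) / measure \<nu> (cyl xs)"

definition supdist :: "('a::finite \<Rightarrow> real) \<Rightarrow> ('a \<Rightarrow> real) \<Rightarrow> real" where
  "supdist p q = Max (range (\<lambda>a. \<bar>p a - q a\<bar>))"

definition weakly_merges :: "(nat \<Rightarrow> 'a::finite) measure \<Rightarrow> (nat \<Rightarrow> 'a) measure \<Rightarrow> bool" where
  "weakly_merges \<mu>t \<mu> \<longleftrightarrow>
     (AE \<omega> in \<mu>. (\<lambda>N. (1 / real N) * (\<Sum>n<N. supdist (cond \<mu>t (hist n \<omega>)) (cond \<mu> (hist n \<omega>))))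
                    \<longlonglongrightarrow> 0)"

text \<open>Strategy with values in the decision set D (encoded as a set of naturals).\<close>
definition strategy :: "nat set \<Rightarrow> ('a list \<Rightarrow> nat) \<Rightarrow> bool" where
  "strategy D f \<longleftrightarrow> (\<forall>h. f h \<in> D)"

definition V :: "nat \<Rightarrow> (nat \<Rightarrow> 'a) measure \<Rightarrow> ('a \<Rightarrow> nat \<Rightarrow> real) \<Rightarrow> ('a list \<Rightarrow> nat) \<Rightarrow> real" where
  "V N \<nu> r f = (1 / real N) * (\<integral>\<omega>. (\<Sum>n<N. r (\<omega> n) (f (hist n \<omega>))) \<partial>\<nu>)"

definition eps_optimal :: "real \<Rightarrow> nat \<Rightarrow> (nat \<Rightarrow> 'a) measure \<Rightarrow> nat set \<Rightarrow> ('a \<Rightarrow> nat \<Rightarrow> real)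
    \<Rightarrow> ('a list \<Rightarrow> nat) \<Rightarrow> bool" where
  "eps_optimal \<epsilon> N \<nu> D r fs \<longleftrightarrow> (\<forall>f. strategy D f \<longrightarrow> V N \<nu> r f \<le> V N \<nu> r fs + \<epsilon>)"

end

theory Submission
  imports Defs
begin

text \<open>
  If \<open>fs\<close> is optimal under \<open>\<mu>t\<close>, no deviation at a single history gains under the conditional
  distribution of \<open>\<mu>t\<close>; under \<open>\<mu>\<close> such a deviation therefore gains at most \<open>|A|\<close> times the
  distance between the two conditionals, weighted by the \<open>\<mu>\<close>-probability of the history.
  Summing over histories, every strategy beats \<open>fs\<close> under \<open>\<mu>\<close> by at most \<open>|A|\<close> times the
  \<open>\<mu>\<close>-expectation of the averaged distances, which tends to \<open>0\<close> by weak merging and dominated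
  convergence. The bound is uniform in the decision problem because payoffs lie in \<open>[0,1]\<close>.
\<close>

lemma space_Omega_M: "space Omega_M = UNIV"
  by (simp add: Omega_M_def space_PiM)

lemma length_hist [simp]: "length (hist n \<omega>) = n"
  by (simp add: hist_def)

lemma hist_Suc: "hist (Suc n) \<omega> = hist n \<omega> @ [\<omega> n]"
  by (simp add: hist_def)

lemma mem_cyl_iff: "\<omega> \<in> cyl xs \<longleftrightarrow> hist (length xs) \<omega> = xs"
  unfolding cyl_def space_Omega_M list_eq_iff_nth_eq by (auto simp: hist_def)

lemma cyl_in_sets: "cyl xs \<in> sets Omega_M"
proof -
  have "{\<omega>\<in>space Omega_M. \<omega> i \<in> {xs ! i}} \<in> sets Omega_M" for i
    unfolding Omega_M_def by (rule sets_Collect_single) auto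
  then have "{\<omega>\<in>space Omega_M. \<forall>i\<in>{..<length xs}. \<omega> i \<in> {xs ! i}} \<in> sets Omega_M"
    by (intro sets.sets_Collect_finite_All) auto
  moreover have "cyl xs = {\<omega>\<in>space Omega_M. \<forall>i\<in>{..<length xs}. \<omega> i \<in> {xs ! i}}"
    unfolding cyl_def by blast
  ultimately show ?thesis by simp
qed

lemma cyl_snoc_subset: "cyl (xs @ [a]) \<subseteq> cyl xs"
  unfolding cyl_def by (auto simp: nth_append)

definition histories :: "nat \<Rightarrow> 'a list set" where
  "histories n = {xs. length xs = n}"

lemma finite_histories: "finite (histories n :: 'a::finite list set)"
  unfolding histories_def using finite_lists_length_eq[of "UNIV :: 'a set" n] by simp

lemma sum_histories_Suc:
  fixes F :: "'a::finite list \<Rightarrow> 'b::comm_monoid_add"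
  shows "(\<Sum>xs\<in>histories (Suc n). F xs) = (\<Sum>h\<in>histories n. \<Sum>a\<in>UNIV. F (h @ [a]))"
proof -
  have "bij_betw (\<lambda>(h, a). h @ [a]) (histories n \<times> UNIV) (histories (Suc n))"
  proof (rule bij_betwI')
    show "x \<in> histories n \<times> UNIV \<Longrightarrow> (case x of (h, a) \<Rightarrow> h @ [a]) \<in> histories (Suc n)" for x
      by (auto simp: histories_def)
    fix xs assume "xs \<in> histories (Suc n)"
    then have "xs = butlast xs @ [last xs]" "butlast xs \<in> histories n"
      by (auto simp: histories_def intro!: append_butlast_last_id[symmetric])
    then show "\<exists>x\<in>histories n \<times> UNIV. xs = (case x of (h, a) \<Rightarrow> h @ [a])"
      by (intro bexI[of _ "(butlast xs, last xs)"]) auto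
  qed auto
  from sum.reindex_bij_betw[OF this, of F, symmetric] show ?thesis
    by (simp add: sum.cartesian_product case_prod_beta)
qed

lemma fun_hist_eq_sum_indicator:
  fixes G :: "'a::finite list \<Rightarrow> real"
  shows "G (hist m \<omega>) = (\<Sum>xs\<in>histories m. G xs * indicator (cyl xs) \<omega>)"
proof -
  have "(\<Sum>xs\<in>histories m. G xs * indicator (cyl xs) \<omega>)
      = (\<Sum>xs\<in>histories m. if hist m \<omega> = xs then G xs else 0)"
    by (intro sum.cong) (auto simp: histories_def mem_cyl_iff)
  moreover have "hist m \<omega> \<in> histories m"
    by (simp add: histories_def)
  ultimately show ?thesis
    by (simp add: sum.delta finite_histories)
qed

lemma
  fixes G :: "'a::finite list \<Rightarrow> real"
  assumes "Delta_Omega \<nu>"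
  shows integrable_fun_hist: "integrable \<nu> (\<lambda>\<omega>. G (hist m \<omega>))"
    and integral_fun_hist: "(\<integral>\<omega>. G (hist m \<omega>) \<partial>\<nu>) = (\<Sum>xs\<in>histories m. G xs * measure \<nu> (cyl xs))"
proof -
  interpret prob_space \<nu>
    using assms by (simp add: Delta_Omega_def)
  have cyl: "cyl xs \<in> sets \<nu>" for xs :: "'a list"
    using assms cyl_in_sets by (simp add: Delta_Omega_def)
  have summand: "integrable \<nu> (\<lambda>\<omega>. G xs * indicator (cyl xs) \<omega>)" for xs
    using cyl by (intro integrable_mult_right integrable_real_indicator) (auto simp: less_top[symmetric])
  then show "integrable \<nu> (\<lambda>\<omega>. G (hist m \<omega>))"
    by (subst fun_hist_eq_sum_indicator) auto
  show "(\<integral>\<omega>. G (hist m \<omega>) \<partial>\<nu>) = (\<Sum>xs\<in>histories m. G xs * measure \<nu> (cyl xs))"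
    using summand cyl
    by (subst fun_hist_eq_sum_indicator) (simp add: sets.Int_space_eq2)
qed

lemma integral_fun_hist_next:
  fixes g :: "'a::finite list \<Rightarrow> 'a \<Rightarrow> real"
  assumes "Delta_Omega \<nu>"
  shows "(\<integral>\<omega>. g (hist n \<omega>) (\<omega> n) \<partial>\<nu>) = (\<Sum>h\<in>histories n. \<Sum>a\<in>UNIV. g h a * measure \<nu> (cyl (h @ [a])))"
proof -
  have "g (hist n \<omega>) (\<omega> n) = g (butlast (hist (Suc n) \<omega>)) (last (hist (Suc n) \<omega>))" for \<omega>
    by (simp add: hist_Suc)
  then show ?thesis
    using integral_fun_hist[OF assms, of "\<lambda>xs. g (butlast xs) (last xs)" "Suc n"]
    by (simp add: sum_histories_Suc)
qed

lemma V_eq_sum_histories: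
  assumes "Delta_Omega (\<nu> :: (nat \<Rightarrow> 'a::finite) measure)"
  shows "V N \<nu> r f =
    (1 / real N) * (\<Sum>n<N. \<Sum>h\<in>histories n. \<Sum>a\<in>UNIV. r a (f h) * measure \<nu> (cyl (h @ [a])))"
proof -
  have "integrable \<nu> (\<lambda>\<omega>. r (\<omega> n) (f (hist n \<omega>)))" for n
    using integrable_fun_hist[OF assms, of "\<lambda>xs. r (last xs) (f (butlast xs))" "Suc n"]
    by (simp add: hist_Suc)
  then show ?thesis
    unfolding V_def by (simp add: integral_fun_hist_next[OF assms, of "\<lambda>h a. r a (f h)"])
qed

lemma measure_cyl_snoc_le:
  assumes "Delta_Omega \<nu>"
  shows "measure \<nu> (cyl (h @ [a])) \<le> measure \<nu> (cyl h)"
proof -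
  interpret prob_space \<nu>
    using assms by (simp add: Delta_Omega_def)
  show ?thesis
    using assms cyl_in_sets
    by (intro finite_measure_mono[OF cyl_snoc_subset]) (simp add: Delta_Omega_def)
qed

text \<open>This chain rule also holds at null histories, where \<open>cond\<close> is \<open>0\<close> by the junk value of division.\<close>

lemma measure_cyl_snoc:
  assumes "Delta_Omega \<nu>"
  shows "measure \<nu> (cyl (h @ [a])) = measure \<nu> (cyl h) * cond \<nu> h a"
  using measure_cyl_snoc_le[OF assms, of h a] measure_nonneg[of \<nu> "cyl (h @ [a])"]
  by (cases "measure \<nu> (cyl h) = 0") (simp_all add: cond_def)

lemma cond_nonneg: "0 \<le> cond \<nu> h a"
  by (simp add: cond_def)

lemma cond_le_1:
  assumes "Delta_Omega \<nu>"
  shows "cond \<nu> h a \<le> 1"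
  using measure_cyl_snoc_le[OF assms, of h a] unfolding cond_def
  by (simp add: divide_le_eq_1 less_le)

lemma abs_le_supdist: "\<bar>p a - q a\<bar> \<le> supdist p q"
  unfolding supdist_def by (rule Max_ge) auto

lemma supdist_nonneg: "0 \<le> supdist p q"
  using abs_le_supdist[of p undefined q] by linarith

lemma supdist_le:
  assumes "\<And>a. \<bar>p a - q a\<bar> \<le> c"
  shows "supdist p q \<le> c"
  unfolding supdist_def using assms by (subst Max_le_iff) auto

lemma supdist_cond_le_1:
  assumes "Delta_Omega \<mu>t" and "Delta_Omega \<mu>"
  shows "supdist (cond \<mu>t h) (cond \<mu> h) \<le> 1"
proof (rule supdist_le)
  fix a
  show "\<bar>cond \<mu>t h a - cond \<mu> h a\<bar> \<le> 1"
    using cond_le_1[OF assms(1), of h a] cond_le_1[OF assms(2), of h a]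
      cond_nonneg[of \<mu>t h a] cond_nonneg[of \<mu> h a]
    by linarith
qed

lemma V_fun_upd:
  fixes \<nu> :: "(nat \<Rightarrow> 'a::finite) measure"
  assumes "Delta_Omega \<nu>" and "length h < N"
  shows "V N \<nu> r (f(h := d)) =
    V N \<nu> r f + (1 / real N) * (\<Sum>a\<in>UNIV. (r a d - r a (f h)) * measure \<nu> (cyl (h @ [a])))"
proof -
  define gain where "gain = (\<Sum>a\<in>UNIV. (r a d - r a (f h)) * measure \<nu> (cyl (h @ [a])))"
  have at_history: "(\<Sum>a\<in>UNIV. r a ((f(h := d)) h') * measure \<nu> (cyl (h' @ [a])))
      = (\<Sum>a\<in>UNIV. r a (f h') * measure \<nu> (cyl (h' @ [a]))) + (if h' = h then gain else 0)" for h'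
    by (cases "h' = h") (simp_all add: gain_def algebra_simps sum.distrib sum_subtractf)
  have "(\<Sum>h'\<in>histories n. if h' = h then gain else 0) = (if n = length h then gain else 0)" for n
    by (subst sum.delta[OF finite_histories]) (auto simp: histories_def)
  then have "(\<Sum>n<N. \<Sum>h'\<in>histories n. if h' = h then gain else 0) = (\<Sum>n<N. if n = length h then gain else 0)"
    by simp
  also have "\<dots> = gain"
    using assms(2) by simp
  finally show ?thesis
    unfolding V_eq_sum_histories[OF assms(1)] at_history gain_def
    by (simp add: sum.distrib algebra_simps)
qed

lemma optimal_no_one_step_gain:
  fixes \<mu>t :: "(nat \<Rightarrow> 'a::finite) measure"
  assumes "Delta_Omega \<mu>t" and "eps_optimal 0 N \<mu>t D r fs" and "strategy D fs"
    and "d \<in> D" and "length h < N"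
  shows "(\<Sum>a\<in>UNIV. (r a d - r a (fs h)) * measure \<mu>t (cyl (h @ [a]))) \<le> 0"
proof -
  have "strategy D (fs(h := d))"
    using assms(3,4) by (simp add: strategy_def)
  then have "V N \<mu>t r (fs(h := d)) \<le> V N \<mu>t r fs"
    using assms(2) by (simp add: eps_optimal_def)
  moreover have "0 < real N"
    using assms(5) by simp
  ultimately show ?thesis
    by (simp add: V_fun_upd[OF assms(1,5)] divide_le_0_iff)
qed

text \<open>
  Split the gain under \<open>\<mu>\<close> as a gain under the conditional of \<open>\<mu>t\<close>, which is nonpositive,
  plus a term controlled by the distance between the two conditionals.
\<close>

lemma one_step_gain_le:
  fixes \<mu>t \<mu> :: "(nat \<Rightarrow> 'a::finite) measure"
  assumes "Delta_Omega \<mu>"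
    and no_gain: "(\<Sum>a\<in>UNIV. g a * measure \<mu>t (cyl (h @ [a]))) \<le> 0"
    and g_bound: "\<And>a. \<bar>g a\<bar> \<le> 1"
  shows "(\<Sum>a\<in>UNIV. g a * measure \<mu> (cyl (h @ [a])))
    \<le> measure \<mu> (cyl h) * (real CARD('a) * supdist (cond \<mu>t h) (cond \<mu> h))"
proof -
  have gain_\<mu>t: "(\<Sum>a\<in>UNIV. g a * cond \<mu>t h a) \<le> 0"
    using no_gain by (simp add: cond_def sum_divide_distrib[symmetric] divide_nonpos_nonneg)
  have "g a * (cond \<mu> h a - cond \<mu>t h a) \<le> supdist (cond \<mu>t h) (cond \<mu> h)" for a
  proof -
    have "g a * (cond \<mu> h a - cond \<mu>t h a) \<le> \<bar>g a\<bar> * \<bar>cond \<mu>t h a - cond \<mu> h a\<bar>"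
      by (simp add: abs_mult[symmetric] abs_minus_commute)
    also have "\<dots> \<le> 1 * supdist (cond \<mu>t h) (cond \<mu> h)"
      using g_bound abs_le_supdist by (intro mult_mono) auto
    finally show ?thesis by simp
  qed
  then have "(\<Sum>a\<in>UNIV. g a * (cond \<mu> h a - cond \<mu>t h a)) \<le> real CARD('a) * supdist (cond \<mu>t h) (cond \<mu> h)"
    by (rule sum_bounded_above[of UNIV, simplified])
  with gain_\<mu>t have "(\<Sum>a\<in>UNIV. g a * cond \<mu> h a) \<le> real CARD('a) * supdist (cond \<mu>t h) (cond \<mu> h)"
    by (simp add: algebra_simps sum_subtractf)
  then have "measure \<mu> (cyl h) * (\<Sum>a\<in>UNIV. g a * cond \<mu> h a)
      \<le> measure \<mu> (cyl h) * (real CARD('a) * supdist (cond \<mu>t h) (cond \<mu> h))"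
    by (rule mult_left_mono) simp
  then show ?thesis
    by (simp add: measure_cyl_snoc[OF assms(1)] sum_distrib_left mult_ac)
qed

lemma V_gain_le_expected_distance:
  fixes \<mu>t \<mu> :: "(nat \<Rightarrow> 'a::finite) measure"
  assumes "Delta_Omega \<mu>t" and "Delta_Omega \<mu>"
    and "eps_optimal 0 N \<mu>t D r fs" and "strategy D fs" and "strategy D f"
    and r01: "\<forall>a. \<forall>d\<in>D. 0 \<le> r a d \<and> r a d \<le> 1"
  shows "V N \<mu> r f - V N \<mu> r fs \<le> real CARD('a) *
    (\<integral>\<omega>. (1 / real N) * (\<Sum>n<N. supdist (cond \<mu>t (hist n \<omega>)) (cond \<mu> (hist n \<omega>))) \<partial>\<mu>)"
proof -
  define dist where "dist h = supdist (cond \<mu>t h) (cond \<mu> h)" for h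
  have "V N \<mu> r f - V N \<mu> r fs = (1 / real N) *
      (\<Sum>n<N. \<Sum>h\<in>histories n. \<Sum>a\<in>UNIV. (r a (f h) - r a (fs h)) * measure \<mu> (cyl (h @ [a])))"
    unfolding V_eq_sum_histories[OF assms(2)]
    by (simp add: sum_subtractf left_diff_distrib right_diff_distrib)
  also have "\<dots> \<le> (1 / real N) * (\<Sum>n<N. \<Sum>h\<in>histories n. measure \<mu> (cyl h) * (real CARD('a) * dist h))"
  proof (intro mult_left_mono sum_mono)
    fix n and h :: "'a list"
    assume "n \<in> {..<N}" "h \<in> histories n"
    then have "length h < N"
      by (simp add: histories_def)
    have "f h \<in> D" "fs h \<in> D"
      using assms(4,5) by (simp_all add: strategy_def)
    have payoff_diff: "\<bar>r a (f h) - r a (fs h)\<bar> \<le> 1" for a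
    proof -
      have "0 \<le> r a (f h) \<and> r a (f h) \<le> 1" "0 \<le> r a (fs h) \<and> r a (fs h) \<le> 1"
        using r01 \<open>f h \<in> D\<close> \<open>fs h \<in> D\<close> by blast+
      then show ?thesis
        by linarith
    qed
    show "(\<Sum>a\<in>UNIV. (r a (f h) - r a (fs h)) * measure \<mu> (cyl (h @ [a])))
        \<le> measure \<mu> (cyl h) * (real CARD('a) * dist h)"
      unfolding dist_def
      using optimal_no_one_step_gain[OF assms(1,3,4) \<open>f h \<in> D\<close> \<open>length h < N\<close>] payoff_diff
      by (rule one_step_gain_le[OF assms(2)])
  qed simp
  also have "\<dots> = real CARD('a) * (\<integral>\<omega>. (1 / real N) * (\<Sum>n<N. dist (hist n \<omega>)) \<partial>\<mu>)"
    using integrable_fun_hist[OF assms(2), of dist]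
    by (simp add: integral_fun_hist[OF assms(2)] sum_distrib_left sum_divide_distrib algebra_simps)
  finally show ?thesis
    unfolding dist_def .
qed

lemma expected_average_distance_tendsto_0:
  fixes \<mu>t \<mu> :: "(nat \<Rightarrow> 'a::finite) measure"
  assumes "Delta_Omega \<mu>t" and "Delta_Omega \<mu>" and "weakly_merges \<mu>t \<mu>"
  shows "(\<lambda>N. \<integral>\<omega>. (1 / real N) * (\<Sum>n<N. supdist (cond \<mu>t (hist n \<omega>)) (cond \<mu> (hist n \<omega>))) \<partial>\<mu>)
    \<longlonglongrightarrow> 0"
proof -
  interpret prob_space \<mu>
    using assms(2) by (simp add: Delta_Omega_def)
  define dist where "dist h = supdist (cond \<mu>t h) (cond \<mu> h)" for h
  define avg where "avg N \<omega> = (1 / real N) * (\<Sum>n<N. dist (hist n \<omega>))" for N \<omega>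
  have avg_bound: "\<bar>avg N \<omega>\<bar> \<le> 1" for N \<omega>
  proof -
    have "0 \<le> (\<Sum>n<N. dist (hist n \<omega>))"
      by (simp add: dist_def sum_nonneg supdist_nonneg)
    moreover have "(\<Sum>n<N. dist (hist n \<omega>)) \<le> real (card {..<N}) * 1"
      unfolding dist_def by (rule sum_bounded_above) (rule supdist_cond_le_1[OF assms(1,2)])
    ultimately show ?thesis
      unfolding avg_def by (cases "N = 0") (auto simp: divide_le_eq_1)
  qed
  have "(\<lambda>N. \<integral>\<omega>. avg N \<omega> \<partial>\<mu>) \<longlonglongrightarrow> (\<integral>\<omega>. 0 \<partial>\<mu>)"
  proof (rule integral_dominated_convergence[where w="\<lambda>_. 1"])
    show "avg N \<in> borel_measurable \<mu>" for N
      unfolding avg_def by (intro borel_measurable_integrable integrable_mult_right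
        Bochner_Integration.integrable_sum integrable_fun_hist[OF assms(2)])
    show "AE \<omega> in \<mu>. (\<lambda>N. avg N \<omega>) \<longlonglongrightarrow> 0"
      using assms(3) unfolding weakly_merges_def avg_def dist_def .
  qed (auto intro!: AE_I2 avg_bound)
  then show ?thesis
    unfolding avg_def dist_def by simp
qed

theorem proposition1:
  fixes \<mu>t \<mu> :: "(nat \<Rightarrow> 'a::finite) measure"
  assumes "Delta_Omega \<mu>t" and "Delta_Omega \<mu>" and "weakly_merges \<mu>t \<mu>"
  shows "\<forall>\<epsilon>>0. \<exists>N0::nat. \<forall>N>N0. \<forall>(D::nat set) (r::'a \<Rightarrow> nat \<Rightarrow> real) fs.
           finite D \<longrightarrow> (\<forall>a. \<forall>d\<in>D. 0 \<le> r a d \<and> r a d \<le> 1) \<longrightarrow> strategy D fs \<longrightarrow>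
           eps_optimal 0 N \<mu>t D r fs \<longrightarrow> eps_optimal \<epsilon> N \<mu> D r fs"
proof -
  define bound where "bound N = real CARD('a) *
    (\<integral>\<omega>. (1 / real N) * (\<Sum>n<N. supdist (cond \<mu>t (hist n \<omega>)) (cond \<mu> (hist n \<omega>))) \<partial>\<mu>)" for N
  have "bound \<longlonglongrightarrow> 0"
    unfolding bound_def by (intro tendsto_mult_right_zero expected_average_distance_tendsto_0 assms)
  have eventually_small: "\<exists>N0. \<forall>N>N0. bound N < \<epsilon>" if "\<epsilon> > 0" for \<epsilon>
  proof -
    from order_tendstoD(2)[OF \<open>bound \<longlonglongrightarrow> 0\<close> that]
    obtain N0 where "\<And>N. N \<ge> N0 \<Longrightarrow> bound N < \<epsilon>"
      by (auto simp: eventually_sequentially)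
    then show ?thesis
      by (blast intro: less_imp_le)
  qed
  have "eps_optimal \<epsilon> N \<mu> D r fs"
    if "bound N < \<epsilon>" and "\<forall>a. \<forall>d\<in>D. 0 \<le> r a d \<and> r a d \<le> 1"
      and "strategy D fs" and "eps_optimal 0 N \<mu>t D r fs" for \<epsilon> N D r fs
    using V_gain_le_expected_distance[OF assms(1,2) that(4,3) _ that(2)] that(1)
    unfolding eps_optimal_def bound_def by fastforce
  then show ?thesis
    by (meson eventually_small)
qed

end
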